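(* There exist a financial system $S$ with payment priorities and a bank $v$ such that: $S$ has exactly two solutions $r_1\neq r_2$, with $q_v(r_1)>0$ and $q_v(r_2)=0$; and for some system $S'$ obtained from $S$ by changing the priorities of (some of) the contracts whose debtor is $v$ (everything else unchanged), $S'$ has exactly one solution $r'$, which satisfies $r'=r_1$ and $q'_v(r')=q_v(r_1)$, where $q'_v$ is the payoff of $v$ in $S'$.
   Context: A financial system with payment priorities consists of: a finite set $V$ of banks; external assets $e_v\ge 0$ for each $v\in V$; a number $P\ge 1$ of priority levels; and a finite set of contracts, each of which is either a debt contract from a debtor $u$ to a creditor $v\neq u$ with weight $c>0$, or a credit default swap (CDS) from a debtor $u$ to a creditor $v\neq u$ in reference to a bank $w\notin\{u,v\}$ (the reference entity) with weight $c>0$. Every contract has a priority in $\{1,\dots,P\}$ (1 is the highest priority). It is assumed that every bank that is the reference entity of some CDS is the debtor of at least one debt contract of positive weight. Given a recovery rate vector $r\in[0,1]^V$: the liability of a contract $k$ is $l_k(r)=c$ if $k$ is a debt of weight $c$, and $l_k(r)=c\,(1-r_w)$ if $k$ is a CDS of weight $c$ in reference to $w$. For a bank $v$, $l_v(r)$ is the sum of the liabilities of the contracts with debtor $v$; $l_v^{(\rho)}(r)$ is the sum of the liabilities of contracts with debtor $v$ and priority $\rho$; and $l_v^{(\le\rho)}(r)=\sum_{i=1}^{\rho}l_v^{(i)}(r)$ (with $l_v^{(\le 0)}=0$). The payment on a contract $k$ with debtor $v$ and priority $\rho$ is $p_k(r)=l_k(r)\cdot\min\{1,\max\{0,(r_v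 l_v(r)-l_v^{(\le\rho-1)}(r))/l_v^{(\rho)}(r)\}\}$ (and $p_k(r)=0$ if $l_v^{(\rho)}(r)=0$). The assets of $v$ are $a_v(r)=e_v+\sum_k p_k(r)$, summing over contracts $k$ with creditor $v$. A vector $r\in[0,1]^V$ is a solution (clearing vector) if for every $v\in V$: $r_v=1$ when $a_v(r)\ge l_v(r)$, and $r_v=a_v(r)/l_v(r)$ when $a_v(r)<l_v(r)$. The payoff of $v$ is $q_v(r)=\max\{a_v(r)-l_v(r),0\}$. When $P=1$, payments reduce to $p_k(r)=r_v\,l_k(r)$ (principle of proportionality); this is called the base model. *)

theory Defs
  imports Main "HOL.Real"
begin

datatype contract =
    Debt (debtor: nat) (creditor: nat) (weight: real) (prio: nat)
  | CDS (debtor: nat) (creditor: nat) (refent: nat) (weight: real) (prio: nat)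

record fsys =
  banks :: "nat set"
  ext :: "nat \<Rightarrow> real"
  levels :: nat
  contracts :: "contract list"

definition wf_contract :: "fsys \<Rightarrow> contract \<Rightarrow> bool" where
  "wf_contract S k = (case k of
      Debt u v c p \<Rightarrow> u \<in> banks S \<and> v \<in> banks S \<and> u \<noteq> v \<and> c > 0 \<and> 1 \<le> p \<and> p \<le> levels S
    | CDS u v w c p \<Rightarrow> u \<in> banks S \<and> v \<in> banks S \<and> w \<in> banks S \<and> u \<noteq> v \<and> w \<noteq> u \<and> w \<noteq> v
        \<and> c > 0 \<and> 1 \<le> p \<and> p \<le> levels S
        \<and> (\<exists>k'\<in>set (contracts S). (\<exists>x c' p'. k' = Debt w x c' p' \<and> c' > 0)))"

definition wf_sys :: "fsys \<Rightarrow> bool" where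
  "wf_sys S = (finite (banks S) \<and> (\<forall>v\<in>banks S. ext S v \<ge> 0) \<and> levels S \<ge> 1
     \<and> (\<forall>k\<in>set (contracts S). wf_contract S k))"

definition liab_c :: "(nat \<Rightarrow> real) \<Rightarrow> contract \<Rightarrow> real" where
  "liab_c r k = (case k of Debt u v c p \<Rightarrow> c | CDS u v w c p \<Rightarrow> c * (1 - r w))"

definition liab :: "fsys \<Rightarrow> (nat \<Rightarrow> real) \<Rightarrow> nat \<Rightarrow> real" where
  "liab S r u = sum_list (map (liab_c r) (filter (\<lambda>k. debtor k = u) (contracts S)))"

definition liab_p :: "fsys \<Rightarrow> (nat \<Rightarrow> real) \<Rightarrow> nat \<Rightarrow> nat \<Rightarrow> real" where
  "liab_p S r u \<rho> = sum_list (map (liab_c r)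
      (filter (\<lambda>k. debtor k = u \<and> prio k = \<rho>) (contracts S)))"

definition liab_le :: "fsys \<Rightarrow> (nat \<Rightarrow> real) \<Rightarrow> nat \<Rightarrow> nat \<Rightarrow> real" where
  "liab_le S r u \<rho> = (\<Sum>i=1..\<rho>. liab_p S r u i)"

definition pay :: "fsys \<Rightarrow> (nat \<Rightarrow> real) \<Rightarrow> contract \<Rightarrow> real" where
  "pay S r k = (let u = debtor k; \<rho> = prio k; L = liab_p S r u \<rho> in
     if L = 0 then 0
     else liab_c r k * min 1 (max 0 ((r u * liab S r u - liab_le S r u (\<rho> - 1)) / L)))"

definition assets :: "fsys \<Rightarrow> (nat \<Rightarrow> real) \<Rightarrow> nat \<Rightarrow> real" where
  "assets S r v = ext S v + sum_list (map (pay S r) (filter (\<lambda>k. creditor k = v) (contracts S)))"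

definition solution :: "fsys \<Rightarrow> (nat \<Rightarrow> real) \<Rightarrow> bool" where
  "solution S r = (\<forall>v\<in>banks S. 0 \<le> r v \<and> r v \<le> 1 \<and>
      (assets S r v \<ge> liab S r v \<longrightarrow> r v = 1) \<and>
      (assets S r v < liab S r v \<longrightarrow> r v = assets S r v / liab S r v))"

definition payoff :: "fsys \<Rightarrow> (nat \<Rightarrow> real) \<Rightarrow> nat \<Rightarrow> real" where
  "payoff S r v = max (assets S r v - liab S r v) 0"

definition agree_on :: "fsys \<Rightarrow> (nat \<Rightarrow> real) \<Rightarrow> (nat \<Rightarrow> real) \<Rightarrow> bool" where
  "agree_on S r r' = (\<forall>u\<in>banks S. r u = r' u)"

definition set_prio :: "nat \<Rightarrow> contract \<Rightarrow> contract" where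
  "set_prio q k = (case k of Debt u v c p \<Rightarrow> Debt u v c q | CDS u v w c p \<Rightarrow> CDS u v w c q)"

definition prio_change :: "fsys \<Rightarrow> fsys \<Rightarrow> nat \<Rightarrow> bool" where
  "prio_change S S' v = (banks S' = banks S \<and> ext S' = ext S \<and> levels S' = levels S \<and>
     list_all2 (\<lambda>k k'. k' = set_prio (prio k') k \<and> (prio k' \<noteq> prio k \<longrightarrow> debtor k = v))
       (contracts S) (contracts S'))"

end

theory Submission
  imports Defs
begin

text \<open>Bank 0 (external assets 4/3) owes a debt of 1 to bank 1 and has sold CDS protection of
  weight 3 on bank 1; bank 1 lives only from bank 0's payment. With both contracts at the same
  priority, a default of bank 0 reduces bank 1's income, and bank 1's default in turn inflates
  bank 0's CDS liability; besides the solution in which everybody pays in full this feedback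
  has the self-fulfilling solution \<open>r\<^sub>0 = r\<^sub>1 = 2/3\<close>, where bank 0 has no equity.
  Moving the CDS to the lower priority level breaks the loop: bank 0 can always pay
  \<open>min (4/3) (liabilities) \<ge> 1\<close>, so the debt to bank 1 is honoured in full and only the
  good solution survives.\<close>

(* Banks are numerals; keep the simplifier from rewriting bank 1 to Suc 0. *)
declare One_nat_def [simp del]

lemma solution_recovery:
  assumes "solution S r" "v \<in> banks S" "liab S r v > 0"
  shows "r v * liab S r v = min (liab S r v) (assets S r v)"
  using assms by (cases "assets S r v \<ge> liab S r v") (auto simp: solution_def)

lemma solution_no_liab:
  assumes "solution S r" "v \<in> banks S" "liab S r v = 0" "assets S r v \<ge> 0"
  shows "r v = 1"
  using assms by (auto simp: solution_def)

definition cds_system :: "nat \<Rightarrow> fsys" where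
  "cds_system q = \<lparr>banks = {0, 1, 2, 3}, ext = (\<lambda>i. if i = 0 then 4/3 else 0), levels = 2,
     contracts = [Debt 0 1 1 1, CDS 0 3 1 3 q, Debt 1 2 1 1]\<rparr>"

lemma banks_cds_system: "banks (cds_system q) = {0, 1, 2, 3}"
  by (simp add: cds_system_def)

lemma wf_cds_system: "1 \<le> q \<Longrightarrow> q \<le> 2 \<Longrightarrow> wf_sys (cds_system q)"
  by (simp add: wf_sys_def wf_contract_def cds_system_def)

lemma prio_change_cds_system: "prio_change (cds_system 1) (cds_system 2) 0"
  by (simp add: prio_change_def cds_system_def set_prio_def)

lemma liab_cds_system:
  "liab (cds_system q) r 0 = 4 - 3 * r 1"
  "liab (cds_system q) r 1 = 1"
  "v \<notin> {0, 1} \<Longrightarrow> liab (cds_system q) r v = 0"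
  by (simp_all add: cds_system_def liab_def liab_c_def)

lemma assets_cds_system:
  "assets (cds_system q) r 0 = 4/3"
  "r 1 \<le> 1 \<Longrightarrow> assets (cds_system 1) r 1 = min 1 (max 0 (r 0))"
  "assets (cds_system 2) r 1 = min 1 (max 0 (r 0 * (4 - 3 * r 1)))"
  by (simp_all add: cds_system_def assets_def pay_def liab_def liab_c_def liab_p_def
      liab_le_def)

lemma assets_cds_system_nonneg:
  "r 1 \<le> 1 \<Longrightarrow> v \<notin> {0, 1} \<Longrightarrow> 0 \<le> assets (cds_system q) r v"
  by (auto simp: cds_system_def assets_def pay_def liab_def liab_c_def liab_p_def liab_le_def
      Let_def)

lemma payoff_cds_system: "payoff (cds_system q) r 0 = max (3 * r 1 - 8/3) 0"
  by (simp add: payoff_def liab_cds_system assets_cds_system)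

lemma solution_cds_system:
  assumes "solution (cds_system q) r"
  shows "r 2 = 1" "r 3 = 1" "0 \<le> r 0" "r 0 \<le> 1" "0 \<le> r 1" "r 1 \<le> 1"
    "r 0 * (4 - 3 * r 1) = min (4 - 3 * r 1) (4/3)"
    "min 1 (assets (cds_system q) r 1) = r 1"
proof -
  have "0 \<le> r v \<and> r v \<le> 1" if "v \<in> {0, 1, 2, 3}" for v
    using assms that by (auto simp: solution_def banks_cds_system)
  then show "0 \<le> r 0" "r 0 \<le> 1" "0 \<le> r 1" "r 1 \<le> 1" by auto
  show "r 2 = 1" "r 3 = 1"
    using solution_no_liab[OF assms] assets_cds_system_nonneg[where r = r] \<open>r 1 \<le> 1\<close>
    by (simp_all add: banks_cds_system liab_cds_system)
  show "r 0 * (4 - 3 * r 1) = min (4 - 3 * r 1) (4/3)"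
    using solution_recovery[OF assms, of 0] \<open>r 1 \<le> 1\<close>
    by (simp add: banks_cds_system liab_cds_system assets_cds_system)
  show "min 1 (assets (cds_system q) r 1) = r 1"
    using solution_recovery[OF assms, of 1] by (simp add: banks_cds_system liab_cds_system)
qed

abbreviation full_recovery :: "nat \<Rightarrow> real" where
  "full_recovery \<equiv> \<lambda>_. 1"

abbreviation joint_default :: "nat \<Rightarrow> real" where
  "joint_default \<equiv> \<lambda>i. if i \<le> 1 then 2/3 else 1"

lemma solution_full_recovery:
  assumes "q = 1 \<or> q = 2"
  shows "solution (cds_system q) full_recovery"
  using assms assets_cds_system_nonneg[of full_recovery 2 q]
    assets_cds_system_nonneg[of full_recovery 3 q]
  by (auto simp: solution_def banks_cds_system liab_cds_system assets_cds_system)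

lemma solution_joint_default: "solution (cds_system 1) joint_default"
  using assets_cds_system_nonneg[of joint_default 2 1]
    assets_cds_system_nonneg[of joint_default 3 1]
  by (auto simp: solution_def banks_cds_system liab_cds_system assets_cds_system)

lemma solutions_same_priority:
  assumes "solution (cds_system 1) r"
  shows "agree_on (cds_system 1) r full_recovery \<or> agree_on (cds_system 1) r joint_default"
proof -
  note eqs = solution_cds_system[OF assms]
  have r1: "r 1 = r 0"
    using eqs by (simp add: assets_cds_system)
  have bank0: "r 0 * (4 - 3 * r 0) = min (4 - 3 * r 0) (4/3)"
    using eqs(7) r1 by simp
  have "r 0 = 1 \<or> r 0 = 2/3"
  proof (cases "4 - 3 * r 0 \<le> 4/3")
    case True
    with bank0 have "(r 0 - 1) * (4 - 3 * r 0) = 0" by (simp add: algebra_simps)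
    with True eqs(4) show ?thesis by auto
  next
    case False
    with bank0 have "3 * (r 0 - 2/3)^2 = 0" by (simp add: power2_eq_square algebra_simps)
    then show ?thesis by simp
  qed
  then show ?thesis
    using r1 eqs(1,2) by (auto simp: agree_on_def banks_cds_system)
qed

text \<open>Subordinating the CDS, bank 0 pays at least 1 at the top level, so bank 1 is paid in
  full.\<close>
lemma solutions_subordinated_cds:
  assumes "solution (cds_system 2) r"
  shows "agree_on (cds_system 2) r full_recovery"
proof -
  note eqs = solution_cds_system[OF assms]
  have "1 \<le> min (4 - 3 * r 1) (4/3)"
    using eqs(6) by simp
  then have "1 \<le> r 0 * (4 - 3 * r 1)"
    using eqs(7) by simp
  then have "assets (cds_system 2) r 1 = 1"
    by (simp add: assets_cds_system)
  then have "r 1 = 1"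
    using eqs(8) by simp
  moreover have "r 0 = 1" using eqs(7) \<open>r 1 = 1\<close> by simp
  ultimately show ?thesis
    using eqs(1,2) by (auto simp: agree_on_def banks_cds_system)
qed

theorem mainTheorem9:
  shows "\<exists>S v r1 r2. wf_sys S \<and> v \<in> banks S \<and>
     solution S r1 \<and> solution S r2 \<and> \<not> agree_on S r1 r2 \<and>
     (\<forall>r. solution S r \<longrightarrow> agree_on S r r1 \<or> agree_on S r r2) \<and>
     payoff S r1 v > 0 \<and> payoff S r2 v = 0 \<and>
     (\<exists>S' r'. wf_sys S' \<and> prio_change S S' v \<and> solution S' r' \<and>
        (\<forall>r. solution S' r \<longrightarrow> agree_on S' r r') \<and>
        agree_on S r' r1 \<and> payoff S' r' v = payoff S r1 v)"
proof (intro exI conjI allI impI)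
  show "wf_sys (cds_system 1)" "wf_sys (cds_system 2)"
    by (simp_all add: wf_cds_system)
  show "solution (cds_system 1) full_recovery" "solution (cds_system 2) full_recovery"
    by (simp_all add: solution_full_recovery)
  show "solution (cds_system 1) joint_default"
    by (fact solution_joint_default)
  show "agree_on (cds_system 1) r full_recovery \<or> agree_on (cds_system 1) r joint_default"
    if "solution (cds_system 1) r" for r
    using that by (fact solutions_same_priority)
  show "agree_on (cds_system 2) r full_recovery" if "solution (cds_system 2) r" for r
    using that by (fact solutions_subordinated_cds)
  show "\<not> agree_on (cds_system 1) full_recovery joint_default"
    "agree_on (cds_system 1) full_recovery full_recovery"
    by (simp_all add: agree_on_def banks_cds_system)
  show "payoff (cds_system 1) full_recovery 0 > 0" "payoff (cds_system 1) joint_default 0 = 0"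
    "payoff (cds_system 2) full_recovery 0 = payoff (cds_system 1) full_recovery 0"
    by (simp_all add: payoff_cds_system)
qed (simp_all add: banks_cds_system prio_change_cds_system)

end
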